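(* Let $n\ge2$, $A\in\mathbb{R}^{n\times m}$, $B\in\mathbb{R}^{m\times n}$, and let $C$ be a cycle in the DSR$^{[2]}$ graph $G^{[2]}_{A,B}$. Then $C$ is direct if it has an even number of inversions, and twisted otherwise.
   Context: DSR graphs: for $A\in\mathbb{R}^{n\times m}$, $B\in\mathbb{R}^{m\times n}$, $G_{A,B}$ is the signed bipartite digraph with S-vertices $S_1,\dots,S_n$ and R-vertices $R_1,\dots,R_m$, an arc $R_j\to S_i$ of sign $\mathrm{sign}(A_{ij})$ iff $A_{ij}\ne0$, an arc $S_i\to R_j$ of sign $\mathrm{sign}(B_{ji})$ iff $B_{ji}\ne0$, with antiparallel arcs of equal sign merged into an undirected edge. Walks traverse edges consistently with orientation; a cycle is a nonempty closed walk with no repeated vertex except first$=$last. DSR$^{[2]}$ graph: $\overline{\mathbf L}^A\in\mathbb{R}^{\binom n2\times mn}$ has rows indexed by $(i,j)$, $i<j$, columns by $(k,l)$, $1\le k\le m$, $1\le l\le n$, with entries $A_{jk}$ if $l=i$, $-A_{ik}$ if $l=j$, $0$ otherwise; $\underline{\mathbf L}^B\in\mathbb{R}^{mn\times\binom n2}$ has $(k,l),(i,j)$ entry $B_{kj}$ if $l=i$, $-B_{ki}$ if $l=j$, $0$ otherwise. $G^{[2]}_{A,B}:=G_{\overline{\mathbf L}^A,\underline{\mathbf L}^B}$, with S-vertices written $ij=ji$ and R-vertices $k^l$; an edge $(ij,k^l)$ exists only if $l\in\{i,j\}$. The projection $\pi$ sends an edge $(ij,k^j)$ of $G^{[2]}_{A,B}$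 to the edge $(S_i,R_k)$ of $G_{A,B}$. Direct/twisted: let $C$ be a cycle of $G^{[2]}_{A,B}$ with S-vertex sequence $a_1b_1,a_2b_2,\dots,a_{T+1}b_{T+1}=a_1b_1$, and write the segment of $C$ from $a_rb_r$ to $a_{r+1}b_{r+1}$ as $(a_rb_r,k^l,a_{r+1}b_{r+1})$ with $l$ the common index; its projection is a length-2 walk in $G_{A,B}$ from $S_x$ to $S_y$, where $x$ is the element of $\{a_r,b_r\}$ other than $l$ and $y$ the element of $\{a_{r+1},b_{r+1}\}$ other than $l$. Starting from the two empty walks at $S_{a_1}$ and $S_{b_1}$, for $r=1,\dots,T$ append this projected segment to whichever of the two current walks ends at $S_x$ (the two current walks always end at the two distinct vertices $S_{a_r},S_{b_r}$). The resulting walks $W',W''$ are either both closed, in which case $C$ is called direct, or one goes from $S_{a_1}$ to $S_{b_1}$ and the other back, in which case $C$ is called twisted. Inversions: two consecutive S-vertices of $C$ (including the last and first) are distinct and share exactly one index; writing them as $ij$ and $ij'$ with common index $i$, the pair is an inversion if $(i-j)(i-j')<0$. *)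

theory Defs
  imports Complex_Main
begin

datatype ('s, 'r) dsr_vertex = SV (sidx: 's) | RV (ridx: 'r)

(* Arcs of the DSR graph G_{A,B} with S-index set SS and R-index set RR:
   R_c -> S_s iff A s c ~= 0,  S_s -> R_c iff B c s ~= 0.
   Signs are irrelevant for traversability; an undirected (merged) edge
   can be traversed in both directions, which is exactly the union of the
   two arc relations below. *)
definition dsr_arc ::
  "'s set \<Rightarrow> 'r set \<Rightarrow> ('s \<Rightarrow> 'r \<Rightarrow> real) \<Rightarrow> ('r \<Rightarrow> 's \<Rightarrow> real)
   \<Rightarrow> ('s, 'r) dsr_vertex \<Rightarrow> ('s, 'r) dsr_vertex \<Rightarrow> bool" where
  "dsr_arc SS RR A B u v \<longleftrightarrow>
     (\<exists>s\<in>SS. \<exists>c\<in>RR. (u = RV c \<and> v = SV s \<and> A s c \<noteq> 0)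
                    \<or> (u = SV s \<and> v = RV c \<and> B c s \<noteq> 0))"

definition is_walk :: "('v \<Rightarrow> 'v \<Rightarrow> bool) \<Rightarrow> 'v list \<Rightarrow> bool" where
  "is_walk E w \<longleftrightarrow> w \<noteq> [] \<and> (\<forall>t. Suc t < length w \<longrightarrow> E (w ! t) (w ! Suc t))"

definition is_cycle :: "('v \<Rightarrow> 'v \<Rightarrow> bool) \<Rightarrow> 'v list \<Rightarrow> bool" where
  "is_cycle E w \<longleftrightarrow> is_walk E w \<and> length w \<ge> 2 \<and> hd w = last w \<and> distinct (butlast w)"

(* The DSR^[2] matrices; A is n x m (entries A i k, 1<=i<=n, 1<=k<=m),
   B is m x n (entries B k i).  Rows/columns of L^A: S-index (i,j) with i<j,
   R-index (k,l) with 1<=k<=m, 1<=l<=n. *)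
definition LA :: "(nat \<Rightarrow> nat \<Rightarrow> real) \<Rightarrow> nat \<times> nat \<Rightarrow> nat \<times> nat \<Rightarrow> real" where
  "LA A ij kl = (case ij of (i, j) \<Rightarrow> case kl of (k, l) \<Rightarrow>
      if l = i then A j k else if l = j then - A i k else 0)"

definition LB :: "(nat \<Rightarrow> nat \<Rightarrow> real) \<Rightarrow> nat \<times> nat \<Rightarrow> nat \<times> nat \<Rightarrow> real" where
  "LB B kl ij = (case kl of (k, l) \<Rightarrow> case ij of (i, j) \<Rightarrow>
      if l = i then B k j else if l = j then - B k i else 0)"

definition S2 :: "nat \<Rightarrow> (nat \<times> nat) set" where
  "S2 n = {(i, j). 1 \<le> i \<and> i < j \<and> j \<le> n}"

definition R2 :: "nat \<Rightarrow> nat \<Rightarrow> (nat \<times> nat) set" where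
  "R2 n m = {1..m} \<times> {1..n}"

definition dsr_graph :: "nat \<Rightarrow> nat \<Rightarrow> (nat \<Rightarrow> nat \<Rightarrow> real) \<Rightarrow> (nat \<Rightarrow> nat \<Rightarrow> real)
   \<Rightarrow> (nat, nat) dsr_vertex \<Rightarrow> (nat, nat) dsr_vertex \<Rightarrow> bool" where
  "dsr_graph n m A B = dsr_arc {1..n} {1..m} A B"

(* Arc relation of G^[2]_{A,B} := G_{L^A, L^B}; S-vertex ij (i<j) is SV (i,j),
   R-vertex k^l is RV (k,l) *)
definition dsr2_graph :: "nat \<Rightarrow> nat \<Rightarrow> (nat \<Rightarrow> nat \<Rightarrow> real) \<Rightarrow> (nat \<Rightarrow> nat \<Rightarrow> real)
   \<Rightarrow> (nat \<times> nat, nat \<times> nat) dsr_vertex \<Rightarrow> (nat \<times> nat, nat \<times> nat) dsr_vertex \<Rightarrow> bool" where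
  "dsr2_graph n m A B = dsr_arc (S2 n) (R2 n m) (LA A) (LB B)"

(* For a closed walk w starting at an S-vertex, of length 2T+1:
   S-vertices a_r b_r = w!(2r), R-vertices k^l = w!(2r+1). *)
definition num_segs :: "('s, 'r) dsr_vertex list \<Rightarrow> nat" where
  "num_segs w = (length w - 1) div 2"

definition svert :: "(nat \<times> nat, nat \<times> nat) dsr_vertex list \<Rightarrow> nat \<Rightarrow> nat \<times> nat" where
  "svert w r = sidx (w ! (2 * r))"

definition rvert :: "(nat \<times> nat, nat \<times> nat) dsr_vertex list \<Rightarrow> nat \<Rightarrow> nat \<times> nat" where
  "rvert w r = ridx (w ! (2 * r + 1))"

definition other :: "nat \<times> nat \<Rightarrow> nat \<Rightarrow> nat" where
  "other p l = (if l = fst p then snd p else fst p)"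

definition add_seg ::
  "(nat, nat) dsr_vertex list \<times> (nat, nat) dsr_vertex list \<Rightarrow> nat \<Rightarrow> nat \<Rightarrow> nat
   \<Rightarrow> (nat, nat) dsr_vertex list \<times> (nat, nat) dsr_vertex list" where
  "add_seg W x k y = (case W of (W1, W2) \<Rightarrow>
      if last W1 = SV x then (W1 @ [RV k, SV y], W2)
      else if last W2 = SV x then (W1, W2 @ [RV k, SV y])
      else (W1, W2))"

definition proj_walks :: "(nat \<times> nat, nat \<times> nat) dsr_vertex list
   \<Rightarrow> (nat, nat) dsr_vertex list \<times> (nat, nat) dsr_vertex list" where
  "proj_walks w =
     foldl (\<lambda>W r. let l = snd (rvert w r); k = fst (rvert w r) in
                 add_seg W (other (svert w r) l) k (other (svert w (Suc r)) l))
       ([SV (fst (svert w 0))], [SV (snd (svert w 0))]) [0..<num_segs w]"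

definition is_direct :: "(nat \<times> nat, nat \<times> nat) dsr_vertex list \<Rightarrow> bool" where
  "is_direct w = (case proj_walks w of (W1, W2) \<Rightarrow> hd W1 = last W1 \<and> hd W2 = last W2)"

definition is_twisted :: "(nat \<times> nat, nat \<times> nat) dsr_vertex list \<Rightarrow> bool" where
  "is_twisted w = (case proj_walks w of (W1, W2) \<Rightarrow>
      hd W1 = SV (fst (svert w 0)) \<and> last W1 = SV (snd (svert w 0)) \<and>
      hd W2 = SV (snd (svert w 0)) \<and> last W2 = SV (fst (svert w 0)))"

definition is_inversion :: "nat \<times> nat \<Rightarrow> nat \<times> nat \<Rightarrow> bool" where
  "is_inversion p q \<longleftrightarrow> p \<noteq> q \<and>
     (\<exists>i j j'. {i, j} = {fst p, snd p} \<and> {i, j'} = {fst q, snd q} \<and>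
              (int i - int j) * (int i - int j') < 0)"

definition num_inversions :: "(nat \<times> nat, nat \<times> nat) dsr_vertex list \<Rightarrow> nat" where
  "num_inversions w = card {r. r < num_segs w \<and> is_inversion (svert w r) (svert w (Suc r))}"

end

theory Submission imports Defs begin

text \<open>Walk along the S-vertices \<open>a\<^sub>rb\<^sub>r\<close> of the cycle, keeping track of which of the two
  projected walks ends at the smaller index \<open>a\<^sub>r\<close>. A segment through \<open>k\<^sup>l\<close> moves the walk
  ending at the partner of \<open>l\<close> to the partner of \<open>l\<close> in \<open>a\<^sub>r\<^sub>+\<^sub>1b\<^sub>r\<^sub>+\<^sub>1\<close>; so the roles
  "smaller/larger end" are swapped exactly when that partner changes side of \<open>l\<close>, i.e. at
  an inversion. After a full turn the S-vertex is \<open>a\<^sub>1b\<^sub>1\<close> again, so the walks are closed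
  iff the roles were swapped an even number of times.\<close>

lemma other_pair:
  assumes "a \<noteq> b" "l = a \<or> l = b"
  shows "{l, other (a, b) l} = {a, b}" and "other (a, b) l \<noteq> l"
  using assms unfolding other_def by auto

lemma is_inversionI:
  assumes "p \<noteq> q" "{i, j} = {fst p, snd p}" "{i, j'} = {fst q, snd q}"
    and "(int i - int j) * (int i - int j') < 0"
  shows "is_inversion p q"
  using assms unfolding is_inversion_def by blast

lemma is_inversion_iff_side_change:
  fixes a b a' b' l :: nat
  assumes "a < b" "a' < b'" "l = a \<or> l = b" "l = a' \<or> l = b'"
  shows "is_inversion (a, b) (a', b') \<longleftrightarrow>
           (a, b) \<noteq> (a', b') \<and> (l < other (a, b) l \<longleftrightarrow> \<not> l < other (a', b') l)"
proof
  assume "is_inversion (a, b) (a', b')"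
  then obtain i j j' where "{i, j} = {a, b}" "{i, j'} = {a', b'}"
      "(int i - int j) * (int i - int j') < 0" "(a, b) \<noteq> (a', b')"
    unfolding is_inversion_def by auto
  then show "(a, b) \<noteq> (a', b') \<and> (l < other (a, b) l \<longleftrightarrow> \<not> l < other (a', b') l)"
    using assms unfolding other_def doubleton_eq_iff by (auto simp: mult_less_0_iff)
next
  assume side: "(a, b) \<noteq> (a', b') \<and> (l < other (a, b) l \<longleftrightarrow> \<not> l < other (a', b') l)"
  note pair = other_pair[OF less_imp_neq[OF assms(1)] assms(3)]
    other_pair[OF less_imp_neq[OF assms(2)] assms(4)]
  have "(int l - int (other (a, b) l)) * (int l - int (other (a', b') l)) < 0"
    using side pair(2,4) assms by (auto simp: mult_less_0_iff)
  then show "is_inversion (a, b) (a', b')"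
    using side pair(1,3) by (intro is_inversionI) simp_all
qed

definition walk_pair_ends ::
  "(nat, nat) dsr_vertex list \<times> (nat, nat) dsr_vertex list \<Rightarrow> nat \<times> nat \<Rightarrow> bool \<Rightarrow> nat \<times> nat \<Rightarrow> bool"
where
  "walk_pair_ends W p\<^sub>0 s p \<longleftrightarrow> (case W of (W1, W2) \<Rightarrow>
     W1 \<noteq> [] \<and> W2 \<noteq> [] \<and> hd W1 = SV (fst p\<^sub>0) \<and> hd W2 = SV (snd p\<^sub>0) \<and>
     last W1 = SV (if s then fst p else snd p) \<and> last W2 = SV (if s then snd p else fst p))"

lemma add_seg_walk_pair_ends:
  fixes a b a' b' l :: nat
  assumes "walk_pair_ends W p\<^sub>0 s (a, b)"
    and "a < b" "a' < b'" "l = a \<or> l = b" "l = a' \<or> l = b'"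
  shows "walk_pair_ends (add_seg W (other (a, b) l) k (other (a', b') l)) p\<^sub>0
           (s \<longleftrightarrow> \<not> is_inversion (a, b) (a', b')) (a', b')"
proof -
  obtain W1 W2 where "W = (W1, W2)" by fastforce
  then show ?thesis
    using assms
    unfolding is_inversion_iff_side_change[OF assms(2-5)] walk_pair_ends_def add_seg_def other_def
    by (cases s) auto
qed

definition proj_step ::
  "(nat \<times> nat, nat \<times> nat) dsr_vertex list
   \<Rightarrow> (nat, nat) dsr_vertex list \<times> (nat, nat) dsr_vertex list \<Rightarrow> nat
   \<Rightarrow> (nat, nat) dsr_vertex list \<times> (nat, nat) dsr_vertex list"
where
  "proj_step w W r = (let l = snd (rvert w r); k = fst (rvert w r) in
     add_seg W (other (svert w r) l) k (other (svert w (Suc r)) l))"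

lemma proj_walks_eq_foldl:
  "proj_walks w = foldl (proj_step w) ([SV (fst (svert w 0))], [SV (snd (svert w 0))]) [0..<num_segs w]"
  unfolding proj_walks_def proj_step_def[abs_def] by (rule refl)

lemma card_less_Suc_filter:
  "card {r. r < Suc t \<and> P r} = card {r. r < t \<and> P r} + (if P t then 1 else 0)"
proof -
  have "{r. r < Suc t \<and> P r} = {r. r < t \<and> P r} \<union> (if P t then {t} else {})"
    by (auto simp: less_Suc_eq)
  then show ?thesis by (auto simp: card_insert_if)
qed

lemma foldl_proj_step_walk_pair_ends:
  assumes ordered: "\<And>r. r \<le> T \<Longrightarrow> fst (svert w r) < snd (svert w r)"
    and shared: "\<And>r. r < T \<Longrightarrow>
           (snd (rvert w r) = fst (svert w r) \<or> snd (rvert w r) = snd (svert w r)) \<and>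
           (snd (rvert w r) = fst (svert w (Suc r)) \<or> snd (rvert w r) = snd (svert w (Suc r)))"
    and "t \<le> T"
  shows "walk_pair_ends
           (foldl (proj_step w) ([SV (fst (svert w 0))], [SV (snd (svert w 0))]) [0..<t])
           (svert w 0)
           (even (card {r. r < t \<and> is_inversion (svert w r) (svert w (Suc r))}))
           (svert w t)"
  using \<open>t \<le> T\<close>
proof (induction t)
  case 0
  then show ?case by (simp add: walk_pair_ends_def)
next
  case (Suc t)
  let ?W = "foldl (proj_step w) ([SV (fst (svert w 0))], [SV (snd (svert w 0))]) [0..<t]"
  let ?s = "even (card {r. r < t \<and> is_inversion (svert w r) (svert w (Suc r))})"
  obtain a b where ab: "svert w t = (a, b)" by fastforce
  obtain a' b' where ab': "svert w (Suc t) = (a', b')" by fastforce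
  obtain k l where kl: "rvert w t = (k, l)" by fastforce
  have "a < b" "a' < b'"
    using ordered[of t] ordered[of "Suc t"] Suc.prems ab ab' by auto
  moreover have "l = a \<or> l = b" "l = a' \<or> l = b'"
    using shared[of t] Suc.prems ab ab' kl by auto
  moreover have "walk_pair_ends ?W (svert w 0) ?s (a, b)"
    using Suc ab by simp
  ultimately have "walk_pair_ends (proj_step w ?W t) (svert w 0)
                     (?s \<longleftrightarrow> \<not> is_inversion (a, b) (a', b')) (a', b')"
    using add_seg_walk_pair_ends ab ab' kl by (simp add: proj_step_def)
  then show ?case
    using ab ab' by (cases "is_inversion (a, b) (a', b')") (simp_all add: card_less_Suc_filter)
qed

lemma dsr_walk_even_iff_SV:
  assumes "is_walk (dsr_arc SS RR A B) w" "\<exists>p. hd w = SV p" "t < length w"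
  shows "even t \<longleftrightarrow> (\<exists>s. w ! t = SV s)"
  using \<open>t < length w\<close>
proof (induction t)
  case 0
  then show ?case using assms(2) by (simp add: hd_conv_nth)
next
  case (Suc t)
  then have "dsr_arc SS RR A B (w ! t) (w ! Suc t)"
    using assms(1) unfolding is_walk_def by auto
  then show ?case using Suc unfolding dsr_arc_def by auto
qed

lemma dsr_cycle_length:
  assumes cycle: "is_cycle (dsr_arc SS RR A B) C" and "\<exists>p. hd C = SV p"
  shows "length C = 2 * num_segs C + 1" and "num_segs C \<ge> 1"
proof -
  have walk: "is_walk (dsr_arc SS RR A B) C" and "length C \<ge> 2" and "hd C = last C"
    using cycle unfolding is_cycle_def by auto
  then have "last C = C ! (length C - 1)"
    by (intro last_conv_nth) auto
  then have "\<exists>s. C ! (length C - 1) = SV s"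
    using \<open>\<exists>p. hd C = SV p\<close> \<open>hd C = last C\<close> by auto
  then have "even (length C - 1)"
    using dsr_walk_even_iff_SV[OF walk \<open>\<exists>p. hd C = SV p\<close>, of "length C - 1"]
      \<open>length C \<ge> 2\<close> by auto
  then show len: "length C = 2 * num_segs C + 1"
    unfolding num_segs_def using \<open>length C \<ge> 2\<close> by auto
  show "num_segs C \<ge> 1" using len \<open>length C \<ge> 2\<close> by simp
qed

lemma LB_nonzero_shared_index: "LB B (k, l) (i, j) \<noteq> 0 \<Longrightarrow> l = i \<or> l = j"
  by (auto simp: LB_def split: if_splits)

lemma LA_nonzero_shared_index: "LA A (i, j) (k, l) \<noteq> 0 \<Longrightarrow> l = i \<or> l = j"
  by (auto simp: LA_def split: if_splits)

lemma dsr2_cycle_segments: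
  assumes cycle: "is_cycle (dsr2_graph n m A B) C" and "\<exists>p. hd C = SV p"
  defines "T \<equiv> num_segs C"
  shows "svert C T = svert C 0"
    and "\<And>r. r \<le> T \<Longrightarrow> fst (svert C r) < snd (svert C r)"
    and "\<And>r. r < T \<Longrightarrow>
           (snd (rvert C r) = fst (svert C r) \<or> snd (rvert C r) = snd (svert C r)) \<and>
           (snd (rvert C r) = fst (svert C (Suc r)) \<or> snd (rvert C r) = snd (svert C (Suc r)))"
proof -
  let ?E = "dsr_arc (S2 n) (R2 n m) (LA A) (LB B)"
  have cycle_E: "is_cycle ?E C" using cycle unfolding dsr2_graph_def .
  then have walk: "is_walk ?E C" and closed: "hd C = last C"
    unfolding is_cycle_def by auto
  note parity = dsr_walk_even_iff_SV[OF walk \<open>\<exists>p. hd C = SV p\<close>]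
  have len: "length C = 2 * T + 1" and "T \<ge> 1"
    using dsr_cycle_length[OF cycle_E \<open>\<exists>p. hd C = SV p\<close>] unfolding T_def by auto
  then have "C \<noteq> []" by auto
  then have last_nth: "last C = C ! (2 * T)" and hd_nth: "hd C = C ! 0"
    using len by (simp_all add: last_conv_nth hd_conv_nth)
  have sv: "C ! (2 * r) = SV (svert C r)" if "r \<le> T" for r
    using parity[of "2 * r"] that len unfolding svert_def by auto
  have rv: "C ! (2 * r + 1) = RV (rvert C r)" if "r < T" for r
    using parity[of "2 * r + 1"] that len unfolding rvert_def by (cases "C ! (2 * r + 1)") auto
  have out_arc: "svert C r \<in> S2 n \<and> LB B (rvert C r) (svert C r) \<noteq> 0" if "r < T" for r
  proof -
    have "?E (C ! (2 * r)) (C ! Suc (2 * r))" using walk len that unfolding is_walk_def by auto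
    then show ?thesis using sv[of r] rv[of r] that unfolding dsr_arc_def by auto
  qed
  have in_arc: "LA A (svert C (Suc r)) (rvert C r) \<noteq> 0" if "r < T" for r
  proof -
    have "?E (C ! (2 * r + 1)) (C ! (2 * Suc r))" using walk len that unfolding is_walk_def by auto
    then show ?thesis using sv[of "Suc r"] rv[of r] that unfolding dsr_arc_def by auto
  qed
  show closed_S: "svert C T = svert C 0"
    using sv[of T] sv[of 0] closed last_nth hd_nth by simp
  show "fst (svert C r) < snd (svert C r)" if "r \<le> T" for r
  proof (cases "r < T")
    case True
    then show ?thesis using out_arc[of r] unfolding S2_def by auto
  next
    case False
    then show ?thesis using that out_arc[of 0] \<open>T \<ge> 1\<close> closed_S unfolding S2_def by auto
  qed
  show "(snd (rvert C r) = fst (svert C r) \<or> snd (rvert C r) = snd (svert C r)) \<and>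
        (snd (rvert C r) = fst (svert C (Suc r)) \<or> snd (rvert C r) = snd (svert C (Suc r)))"
    if "r < T" for r
    using out_arc[OF that] in_arc[OF that] LB_nonzero_shared_index LA_nonzero_shared_index
    by (metis prod.collapse)
qed

theorem proposition5p2:
  fixes n m :: nat and A B :: "nat \<Rightarrow> nat \<Rightarrow> real"
    and C :: "(nat \<times> nat, nat \<times> nat) dsr_vertex list"
  assumes "n \<ge> 2"
    and "is_cycle (dsr2_graph n m A B) C"
    and "\<exists>p. hd C = SV p"
  shows "(even (num_inversions C) \<longrightarrow> is_direct C) \<and> (odd (num_inversions C) \<longrightarrow> is_twisted C)"
proof -
  note segs = dsr2_cycle_segments[OF assms(2,3)]
  have "walk_pair_ends (proj_walks C) (svert C 0) (even (num_inversions C)) (svert C 0)"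
    using foldl_proj_step_walk_pair_ends[where T = "num_segs C", OF segs(2,3) order_refl] segs(1)
    unfolding proj_walks_eq_foldl num_inversions_def by simp
  then show ?thesis
    unfolding walk_pair_ends_def is_direct_def is_twisted_def by (auto split: prod.splits)
qed

end
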